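(* Every abelian group equipped with its Bohr topology is hereditarily $g$-reversible.
   Context: All topological groups are assumed Hausdorff. A topological group $G$ is called $g$-reversible if every continuous automorphism of $G$ (i.e. every continuous group isomorphism of $G$ onto itself) is an open map. A topological group is hereditarily $g$-reversible if every subgroup of it is $g$-reversible in the subspace topology. The Bohr topology of an abelian group $G$ is the coarsest topology on $G$ making all homomorphisms $G\to\mathbb{T}=\mathbb{R}/\mathbb{Z}$ continuous; it is the strongest precompact group topology on $G$. *)

theory Defs
  imports "HOL-Analysis.Analysis" "HOL-Algebra.Algebra"
begin

text \<open>The circle group T = R/Z, realised (isomorphically, as a topological group)
  as the unit circle in the complex plane under multiplication.\<close>
definition circle_group :: "complex monoid" where
  "circle_group = \<lparr>carrier = sphere 0 1, mult = (*), one = 1\<rparr>"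

definition bohr_topology :: "('a, 'b) monoid_scheme \<Rightarrow> 'a topology" where
  "bohr_topology G = topology_generated_by
     {{x \<in> carrier G. chi x \<in> U} | chi U. chi \<in> hom G circle_group \<and> open U}"

definition g_reversible :: "('a, 'b) monoid_scheme \<Rightarrow> 'a topology \<Rightarrow> bool" where
  "g_reversible G T \<longleftrightarrow>
     (\<forall>f. f \<in> iso G G \<and> continuous_map T T f \<longrightarrow> open_map T T f)"

definition hereditarily_g_reversible :: "('a, 'b) monoid_scheme \<Rightarrow> 'a topology \<Rightarrow> bool" where
  "hereditarily_g_reversible G T \<longleftrightarrow>
     (\<forall>H. subgroup H G \<longrightarrow> g_reversible (G\<lparr>carrier := H\<rparr>) (subtopology T H))"

end

theory Submission
  imports Defs
begin

text \<open>Because the circle group is divisible, every character of a subgroup \<open>H\<close> of an abelian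
  group \<open>G\<close> extends to \<open>G\<close> (Zorn's lemma on partial characters, which can always be extended by
  one more element). So for a homomorphism \<open>g\<close> between subgroups and a character \<open>\<chi>\<close> of \<open>G\<close>,
  the character \<open>\<chi> \<circ> g\<close> of \<open>H\<close> is the restriction of a character of \<open>G\<close>, hence continuous for
  the Bohr topology of \<open>G\<close> restricted to \<open>H\<close>: every homomorphism between subgroups is continuous.
  Applied to the inverse of an automorphism, this makes every automorphism of a subgroup a
  homeomorphism.\<close>

lemma carrier_circle_group [simp]: "carrier circle_group = sphere 0 1"
  and mult_circle_group [simp]: "x \<otimes>\<^bsub>circle_group\<^esub> y = x * y"
  and one_circle_group [simp]: "\<one>\<^bsub>circle_group\<^esub> = 1"
  by (simp_all add: circle_group_def)

lemma comm_group_circle_group: "comm_group circle_group"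
proof (rule comm_groupI)
  fix x :: complex assume x: "x \<in> carrier circle_group"
  then have "x \<noteq> 0" by auto
  then have "inverse x \<in> carrier circle_group" "inverse x \<otimes>\<^bsub>circle_group\<^esub> x = \<one>\<^bsub>circle_group\<^esub>"
    using x by (auto simp: norm_inverse)
  then show "\<exists>y \<in> carrier circle_group. y \<otimes>\<^bsub>circle_group\<^esub> x = \<one>\<^bsub>circle_group\<^esub>" by blast
qed (auto simp: norm_mult)

lemma inv_circle_group [simp]:
  assumes "x \<in> sphere 0 1"
  shows "inv\<^bsub>circle_group\<^esub> x = inverse x"
proof -
  interpret comm_group circle_group by (rule comm_group_circle_group)
  have "x \<noteq> 0" using assms by auto
  then show ?thesis
    using assms by (intro inv_equality) (auto simp: norm_inverse)
qed

lemma circle_divisible: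
  assumes "(c::complex) \<in> sphere 0 1" "0 < n"
  shows "\<exists>w \<in> sphere 0 1. w ^ n = c"
proof
  have "c \<noteq> 0" using assms by auto
  then have "c = cis (Arg c)"
    using assms by (simp add: cis_Arg sgn_div_norm)
  then show "cis (Arg c / n) ^ n = c"
    using assms by (simp add: Complex.DeMoivre)
qed simp

text \<open>Graphs of characters of subgroups of \<open>G\<close>, taken as relations so that the union of a
  chain of them is again one.\<close>
definition partial_character :: "('a, 'b) monoid_scheme \<Rightarrow> ('a \<times> complex) set \<Rightarrow> bool" where
  "partial_character G R \<longleftrightarrow> single_valued R \<and> Domain R \<subseteq> carrier G \<and> Range R \<subseteq> sphere 0 1 \<and>
     (\<one>\<^bsub>G\<^esub>, 1) \<in> R \<and>
     (\<forall>x y x' y'. (x, y) \<in> R \<longrightarrow> (x', y') \<in> R \<longrightarrow> (x \<otimes>\<^bsub>G\<^esub> x', y * y') \<in> R) \<and>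
     (\<forall>x y. (x, y) \<in> R \<longrightarrow> (inv\<^bsub>G\<^esub> x, inverse y) \<in> R)"

context
  fixes G (structure) and R
  assumes R: "partial_character G R"
begin

lemma partial_character_unique: "(x, y) \<in> R \<Longrightarrow> (x, y') \<in> R \<Longrightarrow> y' = y"
  using R unfolding partial_character_def by (auto dest: single_valuedD)

lemma partial_character_carrier: "(x, y) \<in> R \<Longrightarrow> x \<in> carrier G"
  using R unfolding partial_character_def by blast

lemma partial_character_sphere: "(x, y) \<in> R \<Longrightarrow> y \<in> sphere 0 1"
  using R unfolding partial_character_def by blast

lemma partial_character_nonzero: "(x, y) \<in> R \<Longrightarrow> y \<noteq> 0"
  using partial_character_sphere by fastforce

lemma partial_character_one: "(\<one>, 1) \<in> R"
  using R unfolding partial_character_def by blast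

lemma partial_character_mult: "(x, y) \<in> R \<Longrightarrow> (x', y') \<in> R \<Longrightarrow> (x \<otimes> x', y * y') \<in> R"
  using R unfolding partial_character_def by blast

lemma partial_character_inv: "(x, y) \<in> R \<Longrightarrow> (inv x, inverse y) \<in> R"
  using R unfolding partial_character_def by blast

end

context group
begin

lemma partial_character_nat_pow:
  assumes "partial_character G R" "(x, y) \<in> R"
  shows "(x [^] (n::nat), y ^ n) \<in> R"
proof (induction n)
  case 0
  then show ?case using partial_character_one[OF assms(1)] by simp
next
  case (Suc n)
  then have "(x [^] n \<otimes> x, y ^ n * y) \<in> R"
    using partial_character_mult[OF assms(1)] assms(2) by blast
  then show ?case by (simp add: mult.commute)
qed

lemma partial_character_int_pow:
  assumes R: "partial_character G R" and xy: "(x, y) \<in> R"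
  shows "(x [^] (j::int), y powi j) \<in> R"
proof (cases j rule: int_cases2)
  case (nonneg n)
  then show ?thesis using partial_character_nat_pow[OF R xy] by (simp add: int_pow_int)
next
  case (nonpos n)
  have "x \<in> carrier G" using partial_character_carrier[OF R xy] .
  then show ?thesis
    using nonpos partial_character_inv[OF R partial_character_nat_pow[OF R xy]]
    by (simp add: int_pow_neg_int power_int_minus)
qed

lemma partial_character_int_pow_diff:
  assumes R: "partial_character G R" and a: "a \<in> carrier G"
    and "(a [^] (j::int), c) \<in> R" "(a [^] (k::int), d) \<in> R"
  shows "(a [^] (j - k), c / d) \<in> R"
  using partial_character_mult[OF R assms(3) partial_character_inv[OF R assms(4)]]
  by (simp add: int_pow_diff[OF a] divide_inverse)

lemma partial_character_pow_abs_in_Domain: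
  assumes R: "partial_character G R" and a: "a \<in> carrier G" and aj: "(a [^] (j::int), c) \<in> R"
  shows "a [^] nat \<bar>j\<bar> \<in> Domain R"
proof -
  have "(a [^] (0::int), 1) \<in> R"
    using partial_character_one[OF R] by simp
  then have minus_j: "(a [^] (0 - j), 1 / c) \<in> R"
    using partial_character_int_pow_diff[OF R a _ aj] by blast
  have "a [^] int (nat \<bar>j\<bar>) \<in> Domain R"
  proof (cases "0 \<le> j")
    case True
    then have "int (nat \<bar>j\<bar>) = j" by simp
    then show ?thesis using aj by (metis Domain.DomainI)
  next
    case False
    then have "int (nat \<bar>j\<bar>) = 0 - j" by simp
    then show ?thesis using minus_j by (metis Domain.DomainI)
  qed
  then show ?thesis
    by (simp only: int_pow_int)
qed

text \<open>The exponents \<open>j\<close> with \<open>a [^] j \<in> Domain R\<close> form a subgroup \<open>n\<int>\<close> of \<open>\<int>\<close>;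
  an \<open>n\<close>-th root of the value at \<open>a [^] n\<close> (or \<open>1\<close> if \<open>n = 0\<close>) is a compatible value for \<open>a\<close>.\<close>
lemma partial_character_cyclic:
  assumes R: "partial_character G R" and a: "a \<in> carrier G"
  shows "\<exists>w \<in> sphere 0 1. \<forall>j c. (a [^] (j::int), c) \<in> R \<longrightarrow> c = w powi j"
proof (cases "\<exists>m::nat. 0 < m \<and> a [^] m \<in> Domain R")
  case True
  define n where "n = (LEAST m::nat. 0 < m \<and> a [^] m \<in> Domain R)"
  have n: "0 < n" "a [^] n \<in> Domain R"
    using LeastI_ex[OF True] unfolding n_def by auto
  have n_min: "n \<le> m" if "0 < m" "a [^] m \<in> Domain R" for m :: nat
    unfolding n_def using that by (simp add: Least_le)
  obtain c0 where c0: "(a [^] int n, c0) \<in> R"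
    using n(2) by (auto simp: int_pow_int)
  obtain w where w: "w \<in> sphere 0 1" "w ^ n = c0"
    using circle_divisible[OF partial_character_sphere[OF R c0] n(1)] by blast
  show ?thesis
  proof (intro bexI allI impI)
    fix j :: int and c assume jc: "(a [^] j, c) \<in> R"
    define q where "q = j div int n"
    have nq: "(a [^] (int n * q), c0 powi q) \<in> R"
      using partial_character_int_pow[OF R c0] by (simp add: int_pow_pow[OF a])
    have "(a [^] (j - int n * q), c / c0 powi q) \<in> R"
      by (rule partial_character_int_pow_diff[OF R a jc nq])
    moreover have "j - int n * q = int (nat (j mod int n))"
      using n(1) by (simp add: q_def minus_mult_div_eq_mod)
    ultimately have "a [^] nat (j mod int n) \<in> Domain R"
      by (metis Domain.DomainI int_pow_int)
    moreover have "nat (j mod int n) < n"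
      using n(1) by (simp add: nat_less_iff)
    ultimately have "\<not> 0 < nat (j mod int n)"
      using n_min leD by blast
    then have "j mod int n = 0"
      using n(1) pos_mod_sign[of "int n" j] by linarith
    then have j: "j = int n * q"
      unfolding q_def using mult_div_mod_eq[of "int n" j] by simp
    then have "c = c0 powi q"
      using partial_character_unique[OF R nq] jc by blast
    also have "\<dots> = (w powi int n) powi q"
      using w(2) by simp
    also have "\<dots> = w powi j"
      by (simp only: j power_int_mult)
    finally show "c = w powi j" .
  qed (fact w(1))
next
  case False
  show ?thesis
  proof (intro bexI allI impI)
    fix j :: int and c assume jc: "(a [^] j, c) \<in> R"
    then have "nat \<bar>j\<bar> = 0"
      using partial_character_pow_abs_in_Domain[OF R a] False by (meson neq0_conv)
    then have "(\<one>, c) \<in> R"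
      using jc by simp
    then show "c = 1 powi j"
      using partial_character_unique[OF R partial_character_one[OF R]] by simp
  qed simp
qed

end

definition adjoin_character ::
    "('a, 'b) monoid_scheme \<Rightarrow> ('a \<times> complex) set \<Rightarrow> 'a \<Rightarrow> complex \<Rightarrow> ('a \<times> complex) set" where
  "adjoin_character G R a w = {(k \<otimes>\<^bsub>G\<^esub> a [^]\<^bsub>G\<^esub> m, c * w powi m) | k c (m::int). (k, c) \<in> R}"

lemma adjoin_characterI: "(k, c) \<in> R \<Longrightarrow> (k \<otimes>\<^bsub>G\<^esub> a [^]\<^bsub>G\<^esub> (m::int), c * w powi m) \<in> adjoin_character G R a w"
  unfolding adjoin_character_def by blast

lemma adjoin_characterE:
  assumes "(x, y) \<in> adjoin_character G R a w"
  obtains k c m where "(k, c) \<in> R" "x = k \<otimes>\<^bsub>G\<^esub> a [^]\<^bsub>G\<^esub> (m::int)" "y = c * w powi m"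
  using assms unfolding adjoin_character_def by blast

context comm_group
begin

context
  fixes R a w
  assumes R: "partial_character G R" and a: "a \<in> carrier G" and w: "w \<in> sphere 0 1"
    and compatible: "\<And>j c. (a [^] (j::int), c) \<in> R \<Longrightarrow> c = w powi j"
begin

private lemma nonzero: "w \<noteq> 0"
  using w by auto

lemma single_valued_adjoin_character: "single_valued (adjoin_character G R a w)"
proof (rule single_valuedI)
  fix x y y' assume "(x, y) \<in> adjoin_character G R a w" "(x, y') \<in> adjoin_character G R a w"
  then obtain k c m k' c' m' where kc: "(k, c) \<in> R" "x = k \<otimes> a [^] (m::int)" "y = c * w powi m"
    and kc': "(k', c') \<in> R" "x = k' \<otimes> a [^] (m'::int)" "y' = c' * w powi m'"
    by (metis adjoin_characterE)
  have k: "k \<in> carrier G" "k' \<in> carrier G"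
    using kc(1) kc'(1) partial_character_carrier[OF R] by auto
  have "inv k \<otimes> k' = inv k \<otimes> ((k' \<otimes> a [^] m') \<otimes> inv (a [^] m'))"
    using k a by (simp add: m_assoc)
  also have "\<dots> = inv k \<otimes> ((k \<otimes> a [^] m) \<otimes> inv (a [^] m'))"
    using kc(2) kc'(2) by simp
  also have "\<dots> = a [^] m \<otimes> inv (a [^] m')"
    using k a by (simp add: m_assoc[symmetric])
  also have "\<dots> = a [^] (m - m')"
    by (simp add: int_pow_diff[OF a])
  finally have "(a [^] (m - m'), inverse c * c') \<in> R"
    using partial_character_mult[OF R partial_character_inv[OF R kc(1)] kc'(1)] by simp
  then have "inverse c * c' = w powi (m - m')"
    by (rule compatible)
  then have "c' = c * w powi (m - m')"
    using partial_character_nonzero[OF R kc(1)] by (simp add: field_simps)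
  also have "\<dots> = c * w powi m / w powi m'"
    using nonzero by (simp add: power_int_diff)
  finally show "y = y'"
    using kc(3) kc'(3) nonzero by (simp add: field_simps)
qed

lemma partial_character_adjoin_character: "partial_character G (adjoin_character G R a w)"
  unfolding partial_character_def
proof (intro conjI allI impI subsetI)
  show "single_valued (adjoin_character G R a w)"
    by (rule single_valued_adjoin_character)
next
  fix x assume "x \<in> Domain (adjoin_character G R a w)"
  then show "x \<in> carrier G"
    using a partial_character_carrier[OF R] by (auto elim!: adjoin_characterE)
next
  fix y assume "y \<in> Range (adjoin_character G R a w)"
  then show "y \<in> sphere 0 1"
    using w partial_character_sphere[OF R] by (auto elim!: adjoin_characterE simp: norm_mult norm_power_int)
next
  show "(\<one>, 1) \<in> adjoin_character G R a w"
    using adjoin_characterI[OF partial_character_one[OF R], of G a 0 w] by simp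
next
  fix x y x' y'
  assume "(x, y) \<in> adjoin_character G R a w" "(x', y') \<in> adjoin_character G R a w"
  then obtain k c m k' c' m' where kc: "(k, c) \<in> R" "x = k \<otimes> a [^] (m::int)" "y = c * w powi m"
    and kc': "(k', c') \<in> R" "x' = k' \<otimes> a [^] (m'::int)" "y' = c' * w powi m'"
    by (metis adjoin_characterE)
  have k: "k \<in> carrier G" "k' \<in> carrier G"
    using kc(1) kc'(1) partial_character_carrier[OF R] by auto
  have "((k \<otimes> k') \<otimes> a [^] (m + m'), (c * c') * w powi (m + m')) \<in> adjoin_character G R a w"
    by (rule adjoin_characterI[OF partial_character_mult[OF R kc(1) kc'(1)]])
  moreover have "(k \<otimes> k') \<otimes> a [^] (m + m') = x \<otimes> x'"
    using kc(2) kc'(2) k a by (simp add: int_pow_mult m_ac)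
  moreover have "(c * c') * w powi (m + m') = y * y'"
    using kc(3) kc'(3) nonzero by (simp add: power_int_add)
  ultimately show "(x \<otimes> x', y * y') \<in> adjoin_character G R a w"
    by simp
next
  fix x y assume "(x, y) \<in> adjoin_character G R a w"
  then obtain k c m where kc: "(k, c) \<in> R" "x = k \<otimes> a [^] (m::int)" "y = c * w powi m"
    by (metis adjoin_characterE)
  have "(inv k \<otimes> a [^] (-m), inverse c * w powi (-m)) \<in> adjoin_character G R a w"
    by (rule adjoin_characterI[OF partial_character_inv[OF R kc(1)]])
  moreover have "inv k \<otimes> a [^] (-m) = inv x"
    using kc(2) partial_character_carrier[OF R kc(1)] a by (simp add: int_pow_neg inv_mult)
  ultimately show "(inv x, inverse y) \<in> adjoin_character G R a w"
    using kc(3) by (simp add: power_int_minus)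
qed

lemma subset_adjoin_character: "R \<subseteq> adjoin_character G R a w"
proof (rule subsetI, unfold split_paired_all)
  fix k c assume "(k, c) \<in> R"
  then show "(k, c) \<in> adjoin_character G R a w"
    using adjoin_characterI[of k c R G a 0 w] partial_character_carrier[OF R] by simp
qed

lemma in_Domain_adjoin_character: "a \<in> Domain (adjoin_character G R a w)"
  using adjoin_characterI[OF partial_character_one[OF R], of G a 1 w] a by auto

end

lemma partial_character_extend:
  assumes R: "partial_character G R" and a: "a \<in> carrier G"
  obtains R' where "partial_character G R'" "R \<subseteq> R'" "a \<in> Domain R'"
proof -
  obtain w where w: "w \<in> sphere 0 1" and compatible: "\<And>j c. (a [^] (j::int), c) \<in> R \<Longrightarrow> c = w powi j"
    using partial_character_cyclic[OF R a] by blast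
  show thesis
  proof (rule that)
    show "partial_character G (adjoin_character G R a w)"
      by (rule partial_character_adjoin_character[OF R a w compatible])
    show "R \<subseteq> adjoin_character G R a w"
      by (rule subset_adjoin_character[OF R a w compatible])
    show "a \<in> Domain (adjoin_character G R a w)"
      by (rule in_Domain_adjoin_character[OF R a w compatible])
  qed
qed

end

lemma partial_character_chain_Union:
  assumes nonempty: "\<C> \<noteq> {}" and chain: "subset.chain {R. partial_character G R} \<C>"
  shows "partial_character G (\<Union>\<C>)"
proof -
  have member: "partial_character G R" if "R \<in> \<C>" for R
    using chain that unfolding subset.chain_def by blast
  have common: "\<exists>R \<in> \<C>. p \<in> R \<and> q \<in> R" if "p \<in> \<Union>\<C>" "q \<in> \<Union>\<C>" for p q
  proof -
    have "finite {p, q}" "{p, q} \<subseteq> \<Union>\<C>"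
      using that by auto
    then obtain R where "R \<in> \<C>" "{p, q} \<subseteq> R"
      by (meson finite_subset_Union_chain nonempty chain)
    then show ?thesis
      by blast
  qed
  show ?thesis
    unfolding partial_character_def
  proof (intro conjI allI impI subsetI single_valuedI)
    fix x y y' assume "(x, y) \<in> \<Union>\<C>" "(x, y') \<in> \<Union>\<C>"
    then obtain R where "R \<in> \<C>" "(x, y) \<in> R" "(x, y') \<in> R"
      using common by blast
    then show "y = y'"
      using partial_character_unique[OF member] by metis
  next
    fix x assume "x \<in> Domain (\<Union>\<C>)"
    then obtain y R where "R \<in> \<C>" "(x, y) \<in> R"
      by blast
    then show "x \<in> carrier G"
      using partial_character_carrier[OF member] by blast
  next
    fix y assume "y \<in> Range (\<Union>\<C>)"
    then obtain x R where "R \<in> \<C>" "(x, y) \<in> R"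
      by blast
    then show "y \<in> sphere 0 1"
      using partial_character_sphere[OF member] by blast
  next
    obtain R where "R \<in> \<C>"
      using nonempty by blast
    then show "(\<one>\<^bsub>G\<^esub>, 1) \<in> \<Union>\<C>"
      using partial_character_one[OF member] by blast
  next
    fix x y x' y' assume "(x, y) \<in> \<Union>\<C>" "(x', y') \<in> \<Union>\<C>"
    then obtain R where "R \<in> \<C>" "(x, y) \<in> R" "(x', y') \<in> R"
      using common by blast
    then show "(x \<otimes>\<^bsub>G\<^esub> x', y * y') \<in> \<Union>\<C>"
      using partial_character_mult[OF member] by blast
  next
    fix x y assume "(x, y) \<in> \<Union>\<C>"
    then obtain R where "R \<in> \<C>" "(x, y) \<in> R"
      by blast
    then show "(inv\<^bsub>G\<^esub> x, inverse y) \<in> \<Union>\<C>"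
      using partial_character_inv[OF member] by blast
  qed
qed

lemma (in group) partial_character_graph:
  assumes H: "subgroup H G" and psi: "psi \<in> hom (G\<lparr>carrier := H\<rparr>) circle_group"
  shows "partial_character G {(x, psi x) | x. x \<in> H}"
proof -
  interpret psi: group_hom "G\<lparr>carrier := H\<rparr>" circle_group psi
    using subgroup.subgroup_is_group[OF H is_group] comm_group.axioms(2)[OF comm_group_circle_group] psi
    by (simp add: group_hom_def group_hom_axioms_def)
  have sphere: "psi x \<in> sphere 0 1" if "x \<in> H" for x
    using psi.hom_closed that by simp
  moreover have "psi (x \<otimes> y) = psi x * psi y" if "x \<in> H" "y \<in> H" for x y
    using psi.hom_mult that by simp
  moreover have "psi (inv x) = inverse (psi x)" if "x \<in> H" for x
    using psi.hom_inv that H sphere[OF that] by simp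
  moreover have "psi \<one> = 1"
    using psi.hom_one by simp
  ultimately show ?thesis
    using subgroup.subset[OF H] subgroup.one_closed[OF H] subgroup.m_closed[OF H] subgroup.m_inv_closed[OF H]
    unfolding partial_character_def single_valued_def by fastforce
qed

lemma partial_character_total_imp_hom:
  assumes R: "partial_character G R" and total: "Domain R = carrier G"
  obtains chi where "chi \<in> hom G circle_group" "\<And>x y. (x, y) \<in> R \<Longrightarrow> chi x = y"
proof
  define chi where "chi x = (THE y. (x, y) \<in> R)" for x
  show chi: "chi x = y" if "(x, y) \<in> R" for x y
    unfolding chi_def using partial_character_unique[OF R] that by blast
  have graph: "(x, chi x) \<in> R" if "x \<in> carrier G" for x
    using that total chi by blast
  show "chi \<in> hom G circle_group"
  proof (rule homI)
    fix x assume "x \<in> carrier G"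
    then show "chi x \<in> carrier circle_group"
      using partial_character_sphere[OF R graph] by simp
  next
    fix x y assume "x \<in> carrier G" "y \<in> carrier G"
    then have "(x \<otimes>\<^bsub>G\<^esub> y, chi x * chi y) \<in> R"
      using partial_character_mult[OF R graph graph] by blast
    then show "chi (x \<otimes>\<^bsub>G\<^esub> y) = chi x \<otimes>\<^bsub>circle_group\<^esub> chi y"
      using chi by simp
  qed
qed

lemma partial_character_maximal_extension:
  assumes "partial_character G R"
  obtains M where "partial_character G M" "R \<subseteq> M"
    "\<And>R'. partial_character G R' \<Longrightarrow> M \<subseteq> R' \<Longrightarrow> R' = M"
proof -
  define \<A> where "\<A> = {R'. partial_character G R' \<and> R \<subseteq> R'}"
  have "\<exists>M \<in> \<A>. \<forall>R' \<in> \<A>. M \<subseteq> R' \<longrightarrow> R' = M"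
  proof (rule subset_Zorn_nonempty)
    show "\<A> \<noteq> {}"
      using assms unfolding \<A>_def by blast
  next
    fix \<C> assume nonempty: "\<C> \<noteq> {}" and chain: "subset.chain \<A> \<C>"
    then have "subset.chain {R'. partial_character G R'} \<C>"
      unfolding subset.chain_def \<A>_def by blast
    then have "partial_character G (\<Union>\<C>)"
      by (rule partial_character_chain_Union[OF nonempty])
    moreover have "R \<subseteq> \<Union>\<C>"
      using nonempty chain unfolding subset.chain_def \<A>_def by blast
    ultimately show "\<Union>\<C> \<in> \<A>"
      unfolding \<A>_def by blast
  qed
  then obtain M where M: "partial_character G M" "R \<subseteq> M"
    and maximal: "\<forall>R' \<in> \<A>. M \<subseteq> R' \<longrightarrow> R' = M"
    unfolding \<A>_def by blast
  show thesis
  proof (rule that[OF M])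
    fix R' assume "partial_character G R'" "M \<subseteq> R'"
    then show "R' = M"
      using maximal M(2) unfolding \<A>_def by blast
  qed
qed

lemma (in comm_group) maximal_partial_character_total:
  assumes M: "partial_character G M"
    and maximal: "\<And>R. partial_character G R \<Longrightarrow> M \<subseteq> R \<Longrightarrow> R = M"
  shows "Domain M = carrier G"
proof
  show "Domain M \<subseteq> carrier G"
    using partial_character_carrier[OF M] by blast
  show "carrier G \<subseteq> Domain M"
  proof
    fix a assume "a \<in> carrier G"
    then obtain R where "partial_character G R" "M \<subseteq> R" "a \<in> Domain R"
      by (rule partial_character_extend[OF M])
    then show "a \<in> Domain M"
      using maximal by blast
  qed
qed

theorem (in comm_group) character_extension:
  assumes H: "subgroup H G" and psi: "psi \<in> hom (G\<lparr>carrier := H\<rparr>) circle_group"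
  obtains chi where "chi \<in> hom G circle_group" "\<And>x. x \<in> H \<Longrightarrow> chi x = psi x"
proof -
  obtain M where M: "partial_character G M" and graph: "{(x, psi x) | x. x \<in> H} \<subseteq> M"
    and maximal: "\<And>R. partial_character G R \<Longrightarrow> M \<subseteq> R \<Longrightarrow> R = M"
    using partial_character_maximal_extension[OF partial_character_graph[OF H psi]] by blast
  obtain chi where "chi \<in> hom G circle_group" "\<And>x y. (x, y) \<in> M \<Longrightarrow> chi x = y"
    using partial_character_total_imp_hom[OF M maximal_partial_character_total[OF M maximal]] by blast
  then show thesis
    using that graph by blast
qed

lemma topspace_bohr_topology [simp]: "topspace (bohr_topology G) = carrier G"
proof -
  have "(\<lambda>x. 1) \<in> hom G circle_group"
    by (simp add: homI)
  then have "carrier G \<in> {{x \<in> carrier G. chi x \<in> U} | chi U. chi \<in> hom G circle_group \<and> open U}"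
    by force
  then show ?thesis
    unfolding bohr_topology_def by auto
qed

lemma openin_bohr_topology_character:
  assumes "chi \<in> hom G circle_group" "open U"
  shows "openin (bohr_topology G) {x \<in> carrier G. chi x \<in> U}"
  unfolding bohr_topology_def using assms by (intro topology_generated_by_Basis) blast

lemma (in comm_group) continuous_map_bohr_topology_subgroup_hom:
  assumes H: "subgroup H G" and K: "subgroup K G"
    and g: "g \<in> hom (G\<lparr>carrier := H\<rparr>) (G\<lparr>carrier := K\<rparr>)"
  shows "continuous_map (subtopology (bohr_topology G) H) (subtopology (bohr_topology G) K) g"
proof -
  let ?X = "subtopology (bohr_topology G) H"
  have topspace_X: "topspace ?X = H"
    using subgroup.subset[OF H] by auto
  have g_into: "g x \<in> K" if "x \<in> H" for x
    using hom_in_carrier[OF g] that by simp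
  let ?S = "{{x \<in> carrier G. chi x \<in> V} | chi V. chi \<in> hom G circle_group \<and> open V}"
  have "continuous_map ?X (topology_generated_by ?S) g"
  proof (rule continuous_on_generated_topo)
    fix U assume "U \<in> ?S"
    then obtain chi V where U: "U = {x \<in> carrier G. chi x \<in> V}"
      and chi: "chi \<in> hom G circle_group" and V: "open V"
      by blast
    have "chi \<in> hom (G\<lparr>carrier := K\<rparr>) circle_group"
      using chi subgroup.subset[OF K] by (auto simp: hom_def)
    then have "chi \<circ> g \<in> hom (G\<lparr>carrier := H\<rparr>) circle_group"
      by (rule Group.hom_compose[OF g])
    then obtain chi' where chi': "chi' \<in> hom G circle_group" and extends: "\<And>x. x \<in> H \<Longrightarrow> chi' x = chi (g x)"
      by (metis H character_extension comp_apply)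
    have "g -` U \<inter> topspace ?X = H \<inter> {x \<in> carrier G. chi' x \<in> V}"
      using topspace_X g_into extends subgroup.subset[OF H] subgroup.subset[OF K] U by auto
    moreover have "openin ?X (H \<inter> {x \<in> carrier G. chi' x \<in> V})"
      by (intro openin_subtopology_Int2 openin_bohr_topology_character chi' V)
    ultimately show "openin ?X (g -` U \<inter> topspace ?X)"
      by simp
  next
    show "g ` topspace ?X \<subseteq> \<Union>?S"
      using topspace_bohr_topology[of G] topspace_X g_into subgroup.subset[OF K]
      unfolding bohr_topology_def by auto
  qed
  then have "continuous_map ?X (bohr_topology G) g"
    by (simp only: bohr_topology_def)
  then show ?thesis
    using topspace_X g_into by (auto simp: continuous_map_in_subtopology)
qed

theorem proposition7p5:
  fixes G :: "('a, 'b) monoid_scheme"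
  assumes "comm_group G"
  shows "hereditarily_g_reversible G (bohr_topology G)"
proof -
  interpret comm_group G by fact
  show ?thesis
    unfolding hereditarily_g_reversible_def g_reversible_def
  proof (intro allI impI)
    fix H f
    let ?H = "G\<lparr>carrier := H\<rparr>" and ?X = "subtopology (bohr_topology G) H"
    assume H: "subgroup H G" and "f \<in> iso ?H ?H \<and> continuous_map ?X ?X f"
    then have f: "f \<in> iso ?H ?H" \<comment> \<open>continuity of \<open>f\<close> is automatic and not needed\<close>
      by blast
    have "inv_into H f \<in> iso ?H ?H"
      using group.iso_set_sym[OF subgroup.subgroup_is_group[OF H is_group] f] by simp
    then have "homeomorphic_maps ?X ?X f (inv_into H f)"
      using f subgroup.subset[OF H] continuous_map_bohr_topology_subgroup_hom[OF H H]
      unfolding homeomorphic_maps_def iso_def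
      by (auto simp: bij_betw_inv_into_left bij_betw_inv_into_right)
    then show "open_map ?X ?X f"
      using homeomorphic_imp_open_map homeomorphic_maps_imp_map by blast
  qed
qed

end
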